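(* Let $n\ge 1$, let $z_1,\dots,z_n$ be distinct integers none of which is $1$ or $-1$, and let $D=\{1,-1,z_1,\dots,z_n\}$. Then $diam(D)=2$ if $n=1$, $diam(D)=3$ if $n=2$, and $diam(D)=4$ if $n>2$.
   Context: A signed tree is a pair $(T,s)$ where $T$ is a finite tree and $s:E(T)\to\{+,-\}$. The signed degree $sdeg(v)$ of a vertex is the number of incident positive edges minus the number of incident negative edges. $(T,s)$ realizes (satisfies) a set $D$ of integers if $D=\{sdeg(v):v\in V(T)\}$. For a set $D$ containing $1$ or $-1$, $diam(D)=\min\{diam(T): \text{some signed tree }(T,s)\text{ realizes }D\}$, where $diam(T)$ is the diameter of the tree $T$. *)

theory Defs
  imports Main
begin

(* Undirected simple graphs on vertex set V :: nat set (vertex labels in nat are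
   w.l.o.g. for finite trees); edges are 2-element vertex sets. *)

definition is_walk :: "nat set set \<Rightarrow> nat list \<Rightarrow> bool" where
  "is_walk E xs \<longleftrightarrow> xs \<noteq> [] \<and> (\<forall>i. Suc i < length xs \<longrightarrow> {xs ! i, xs ! Suc i} \<in> E)"

definition reachable :: "nat set set \<Rightarrow> nat \<Rightarrow> nat \<Rightarrow> bool" where
  "reachable E u v \<longleftrightarrow> (\<exists>xs. is_walk E xs \<and> hd xs = u \<and> last xs = v)"

definition is_graph :: "nat set \<Rightarrow> nat set set \<Rightarrow> bool" where
  "is_graph V E \<longleftrightarrow> finite V \<and> (\<forall>e\<in>E. e \<subseteq> V \<and> card e = 2)"

definition connected_graph :: "nat set \<Rightarrow> nat set set \<Rightarrow> bool" where
  "connected_graph V E \<longleftrightarrow> V \<noteq> {} \<and> (\<forall>u\<in>V. \<forall>v\<in>V. reachable E u v)"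

(* a cycle: a closed walk of length >= 3 whose vertices (except the repeated end)
   are pairwise distinct *)
definition has_cycle :: "nat set set \<Rightarrow> bool" where
  "has_cycle E \<longleftrightarrow> (\<exists>xs. is_walk E xs \<and> length xs \<ge> 4 \<and> hd xs = last xs \<and> distinct (tl xs))"

definition is_tree :: "nat set \<Rightarrow> nat set set \<Rightarrow> bool" where
  "is_tree V E \<longleftrightarrow> is_graph V E \<and> connected_graph V E \<and> \<not> has_cycle E"

definition dist :: "nat set set \<Rightarrow> nat \<Rightarrow> nat \<Rightarrow> nat" where
  "dist E u v = (LEAST k. \<exists>xs. is_walk E xs \<and> hd xs = u \<and> last xs = v \<and> length xs = Suc k)"

definition tree_diam :: "nat set \<Rightarrow> nat set set \<Rightarrow> nat" where
  "tree_diam V E = Max {dist E u v | u v. u \<in> V \<and> v \<in> V}"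

(* sign of an edge: True = positive, False = negative *)
definition sdeg :: "nat set set \<Rightarrow> (nat set \<Rightarrow> bool) \<Rightarrow> nat \<Rightarrow> int" where
  "sdeg E s v = int (card {e\<in>E. v \<in> e \<and> s e}) - int (card {e\<in>E. v \<in> e \<and> \<not> s e})"

definition realizes :: "nat set \<Rightarrow> nat set set \<Rightarrow> (nat set \<Rightarrow> bool) \<Rightarrow> int set \<Rightarrow> bool" where
  "realizes V E s D \<longleftrightarrow> D = sdeg E s ` V"

definition diamD :: "int set \<Rightarrow> nat" where
  "diamD D = (LEAST d. \<exists>V E s. is_tree V E \<and> realizes V E s D \<and> tree_diam V E = d)"

end

theory Submission
  imports Defs
begin

text \<open>Leaves of a signed tree have signed degree \<open>\<plusminus>1\<close>, so a tree realizing \<open>D\<close> has at least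
  \<open>|D| - 2\<close> internal vertices.  In a tree of diameter at most \<open>3\<close> the internal vertices are
  pairwise adjacent and, since a tree has no triangle, there are at most \<open>diam - 1\<close> of them.
  Hence every realizing tree has diameter at least \<open>min (|D| - 1) 4 = min (n + 1) 4\<close>.
  Conversely, a spider with \<open>n\<close> hubs, all joined to one of them, and with suitable numbers of
  positive and negative pendant leaves at each hub realizes \<open>D\<close> with diameter at most
  \<open>min (n + 1) 4\<close>.\<close>

lemma is_walk_Nil [simp]: "\<not> is_walk E []"
  by (simp add: is_walk_def)

lemma is_walk_singleton [simp]: "is_walk E [x]"
  by (simp add: is_walk_def)

lemma is_walk_Cons_Cons [simp]: "is_walk E (x # y # xs) \<longleftrightarrow> {x, y} \<in> E \<and> is_walk E (y # xs)"
  unfolding is_walk_def by (auto simp: nth_Cons split: nat.splits)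

lemma is_walk_take_drop:
  assumes "is_walk E xs" "i + l \<le> length xs" "1 \<le> l"
  shows "is_walk E (take l (drop i xs))"
  using assms unfolding is_walk_def by (auto simp: min_def)

lemma is_walk_append:
  "is_walk E xs \<Longrightarrow> is_walk E ys \<Longrightarrow> last xs = hd ys \<Longrightarrow> is_walk E (xs @ tl ys)"
proof (induction xs rule: induct_list012)
  case (2 x)
  then show ?case by (cases ys) auto
qed auto

lemma is_walk_rev: "is_walk E xs \<Longrightarrow> is_walk E (rev xs)"
proof (induction xs rule: induct_list012)
  case (3 x y xs)
  then have "is_walk E (rev (y # xs) @ tl [y, x])"
    by (intro is_walk_append) (auto simp: insert_commute last_rev)
  then show ?case by simp
qed auto

lemma reachable_refl: "reachable E u u"
  unfolding reachable_def by (auto intro!: exI[of _ "[u]"])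

lemma reachable_edge: "{u, v} \<in> E \<Longrightarrow> reachable E u v"
  unfolding reachable_def by (auto intro!: exI[of _ "[u, v]"])

lemma reachable_trans: "reachable E u w \<Longrightarrow> reachable E w v \<Longrightarrow> reachable E u v"
  unfolding reachable_def
proof (elim exE conjE)
  fix xs ys assume "is_walk E xs" "hd xs = u" "last xs = w" "is_walk E ys" "hd ys = w" "last ys = v"
  moreover from this have "is_walk E (xs @ tl ys)"
    by (simp add: is_walk_append)
  ultimately show "\<exists>zs. is_walk E zs \<and> hd zs = u \<and> last zs = v"
    by (cases xs; cases ys) auto
qed

lemma reachable_sym: "reachable E u v \<Longrightarrow> reachable E v u"
  unfolding reachable_def
  by (metis hd_rev is_walk_Nil is_walk_rev last_rev rev_is_Nil_conv)

lemma dist_le_walk: "is_walk E xs \<Longrightarrow> dist E (hd xs) (last xs) \<le> length xs - 1"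
  unfolding dist_def by (rule Least_le) (cases xs, auto)

lemma shortest_walk_exists:
  assumes "reachable E u v"
  obtains xs where "is_walk E xs" "hd xs = u" "last xs = v" "length xs = Suc (dist E u v)"
proof -
  obtain ys where ys: "is_walk E ys" "hd ys = u" "last ys = v"
    using assms unfolding reachable_def by blast
  then have "\<exists>k xs. is_walk E xs \<and> hd xs = u \<and> last xs = v \<and> length xs = Suc k"
    by (intro exI[of _ "length ys - 1"] exI[of _ ys]) (cases ys, auto)
  then have "\<exists>xs. is_walk E xs \<and> hd xs = u \<and> last xs = v \<and> length xs = Suc (dist E u v)"
    unfolding dist_def by (rule LeastI_ex)
  then show thesis
    using that by blast
qed

lemma dist_self: "dist E u u = 0"
  using dist_le_walk[of E "[u]"] by simp

lemma dist_edge_le: "{u, v} \<in> E \<Longrightarrow> dist E u v \<le> 1"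
  using dist_le_walk[of E "[u, v]"] by simp

lemma dist_triangle:
  assumes "reachable E u w" "reachable E w v"
  shows "dist E u v \<le> dist E u w + dist E w v"
proof -
  obtain xs where xs: "is_walk E xs" "hd xs = u" "last xs = w" "length xs = Suc (dist E u w)"
    using shortest_walk_exists[OF assms(1)] by blast
  obtain ys where ys: "is_walk E ys" "hd ys = w" "last ys = v" "length ys = Suc (dist E w v)"
    using shortest_walk_exists[OF assms(2)] by blast
  have "dist E u v \<le> length (xs @ tl ys) - 1"
    using dist_le_walk[of E "xs @ tl ys"] xs ys is_walk_append[of E xs ys]
    by (cases xs; cases ys) auto
  then show ?thesis using xs ys by simp
qed

lemma dist_commute: "reachable E u v \<Longrightarrow> dist E u v = dist E v u"
proof -
  have "dist E v u \<le> dist E u v" if uv: "reachable E u v" for u v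
  proof -
    obtain xs where xs: "is_walk E xs" "hd xs = u" "last xs = v" "length xs = Suc (dist E u v)"
      using shortest_walk_exists[OF uv] by blast
    then show ?thesis
      using dist_le_walk[OF is_walk_rev[OF xs(1)]] by (cases xs) (auto simp: hd_rev last_rev)
  qed
  then show "reachable E u v \<Longrightarrow> dist E u v = dist E v u"
    by (meson reachable_sym antisym)
qed

lemma tree_diam_eq_Max_image: "tree_diam V E = Max ((\<lambda>(u, v). dist E u v) ` (V \<times> V))"
  unfolding tree_diam_def by (rule arg_cong[where f = Max]) auto

lemma dist_le_tree_diam: "finite V \<Longrightarrow> u \<in> V \<Longrightarrow> v \<in> V \<Longrightarrow> dist E u v \<le> tree_diam V E"
  unfolding tree_diam_eq_Max_image by (rule Max_ge) auto

lemma tree_diam_le: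
  assumes "finite V" "V \<noteq> {}" "\<And>u v. u \<in> V \<Longrightarrow> v \<in> V \<Longrightarrow> dist E u v \<le> d"
  shows "tree_diam V E \<le> d"
  unfolding tree_diam_eq_Max_image using assms by auto

lemma tree_diam_le_twice_radius:
  assumes "finite V" "connected_graph V E" "c \<in> V" "\<forall>x\<in>V. dist E x c \<le> r"
  shows "tree_diam V E \<le> 2 * r"
proof (rule tree_diam_le)
  fix u v assume uv: "u \<in> V" "v \<in> V"
  then have "reachable E u c" "reachable E c v"
    using assms(2,3) unfolding connected_graph_def by auto
  then have "dist E u v \<le> dist E u c + dist E c v"
    by (rule dist_triangle)
  also have "dist E c v = dist E v c"
    by (rule dist_commute) fact
  finally have "dist E u v \<le> dist E u c + dist E v c" .
  moreover have "dist E u c \<le> r" "dist E v c \<le> r"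
    using assms(4) uv by auto
  ultimately show "dist E u v \<le> 2 * r"
    by linarith
qed (use assms in \<open>auto simp: connected_graph_def\<close>)

lemma tree_diam_le_3_if_central_edge:
  assumes "finite V" "connected_graph V E" "{c, c'} \<in> E" "c \<in> V" "c' \<in> V"
    and "\<forall>x\<in>V. dist E x c \<le> 1 \<or> dist E x c' \<le> 1"
  shows "tree_diam V E \<le> 3"
proof (rule tree_diam_le)
  have reach: "reachable E x y" if "x \<in> V" "y \<in> V" for x y
    using assms(2) that unfolding connected_graph_def by auto
  have centre: "dist E a b \<le> 1" if "a \<in> {c, c'}" "b \<in> {c, c'}" for a b
    using that dist_edge_le[OF assms(3)] dist_commute[OF reachable_edge[OF assms(3)]] dist_self
    by auto
  fix u v assume uv: "u \<in> V" "v \<in> V"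
  obtain a b where ab: "a \<in> {c, c'}" "b \<in> {c, c'}" "dist E u a \<le> 1" "dist E v b \<le> 1"
    using assms(6) uv by blast
  then have V: "a \<in> V" "b \<in> V"
    using assms(4,5) by auto
  have "dist E u v \<le> dist E u a + dist E a v"
    using reach uv V by (intro dist_triangle)
  also have "dist E a v \<le> dist E a b + dist E b v"
    using reach uv V by (intro dist_triangle)
  also have "dist E b v = dist E v b"
    using reach uv V by (intro dist_commute)
  finally show "dist E u v \<le> 3"
    using ab centre[OF ab(1,2)] by linarith
qed (use assms in \<open>auto simp: connected_graph_def\<close>)

fun non_backtracking :: "nat list \<Rightarrow> bool" where
  "non_backtracking (x # y # z # xs) \<longleftrightarrow> x \<noteq> z \<and> non_backtracking (y # z # xs)"
| "non_backtracking _ \<longleftrightarrow> True"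

lemma non_backtracking_iff_nth:
  "non_backtracking xs \<longleftrightarrow> (\<forall>i. Suc (Suc i) < length xs \<longrightarrow> xs ! i \<noteq> xs ! Suc (Suc i))"
  by (induction xs rule: non_backtracking.induct) (auto simp: nth_Cons split: nat.splits)

lemma non_backtracking_ConsD: "non_backtracking (x # xs) \<Longrightarrow> non_backtracking xs"
  by (cases xs rule: non_backtracking.cases) auto

lemma non_backtracking_take_drop:
  "non_backtracking xs \<Longrightarrow> non_backtracking (take l (drop i xs))"
  unfolding non_backtracking_iff_nth by auto

text \<open>A repeated vertex in a closed walk splits off a shorter closed walk.\<close>

lemma has_cycle_if_closed_non_backtracking_walk:
  assumes "\<forall>e\<in>E. card e = 2"
  shows "is_walk E xs \<Longrightarrow> non_backtracking xs \<Longrightarrow> hd xs = last xs \<Longrightarrow> 2 \<le> length xs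
    \<Longrightarrow> has_cycle E"
proof (induction "length xs" arbitrary: xs rule: less_induct)
  case less
  consider "length xs = 2" | "length xs = 3" | "4 \<le> length xs" "distinct (tl xs)"
    | "4 \<le> length xs" "\<not> distinct (tl xs)"
    using less.prems(4) by linarith
  then show ?case
  proof cases
    case 1
    then obtain u v where "xs = [u, v]" by (auto simp: length_Suc_conv numeral_2_eq_2)
    then show ?thesis using less.prems assms by auto
  next
    case 2
    then obtain u v w where "xs = [u, v, w]" by (auto simp: length_Suc_conv numeral_3_eq_3)
    then show ?thesis using less.prems by auto
  next
    case 3
    then show ?thesis using less.prems unfolding has_cycle_def by blast
  next
    case 4
    then obtain i j where ij: "i < j" "j < length (tl xs)" "tl xs ! i = tl xs ! j"
      by (metis distinct_conv_nth linorder_neqE_nat)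
    define ys where "ys = take (j - i + 1) (drop (Suc i) xs)"
    have len: "length ys = j - i + 1"
      using ij unfolding ys_def by auto
    have "is_walk E ys"
      unfolding ys_def using ij less.prems by (intro is_walk_take_drop) auto
    moreover have "non_backtracking ys"
      unfolding ys_def using less.prems by (intro non_backtracking_take_drop)
    moreover have "hd ys = last ys"
      using ij len unfolding ys_def by (auto simp: hd_drop_conv_nth hd_take last_conv_nth nth_tl)
    ultimately show ?thesis
      using less.hyps[of ys] len ij by auto
  qed
qed

text \<open>Induction on the other walk
  \<open>q\<close>: when \<open>p\<close> leaves the common start along a different edge than \<open>q\<close>, prepend the first
  step of \<open>q\<close> to \<open>p\<close>; a closed non-backtracking walk would contain a cycle.\<close>

lemma non_backtracking_walk_shortest:
  assumes "\<forall>e\<in>E. card e = 2" "\<not> has_cycle E"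
  shows "is_walk E q \<Longrightarrow> is_walk E p \<Longrightarrow> non_backtracking p \<Longrightarrow> hd p = hd q \<Longrightarrow>
    last p = last q \<Longrightarrow> length p \<le> length q"
proof (induction q arbitrary: p)
  case (Cons a q)
  show ?case
  proof (cases "q = [] \<or> length p < 2")
    case True
    then have "length p < 2"
    proof
      assume "q = []"
      then have "hd p = last p" using Cons.prems by simp
      then show "length p < 2"
        using has_cycle_if_closed_non_backtracking_walk[OF assms(1) Cons.prems(2,3)] assms(2)
        by linarith
    qed
    then show ?thesis by simp
  next
    case False
    then obtain y q' x x' p' where q: "q = y # q'" and p: "p = x # x' # p'"
      by (auto simp: neq_Nil_conv length_Suc_conv numeral_2_eq_2 not_less le_Suc_eq
          Suc_le_length_iff)
    show ?thesis
    proof (cases "x' = y")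
      case True
      then have "length (x' # p') \<le> length q"
        using Cons.prems p q by (intro Cons.IH) (simp_all add: non_backtracking_ConsD)
      then show ?thesis using p by simp
    next
      case False
      then have "length (y # p) \<le> length q"
        using Cons.prems p q by (intro Cons.IH) (simp_all add: insert_commute)
      then show ?thesis by simp
    qed
  qed
qed simp

lemma tree_edgeD: "is_tree V E \<Longrightarrow> {a, b} \<in> E \<Longrightarrow> a \<in> V \<and> b \<in> V \<and> a \<noteq> b"
  unfolding is_tree_def is_graph_def by (metis card_1_singleton_iff insert_absorb2 insert_subset
      numeral_2_eq_2 n_not_Suc_n)

lemma non_backtracking_walk_length_le_tree_diam:
  assumes T: "is_tree V E" and p: "is_walk E p" "non_backtracking p" "hd p \<in> V" "last p \<in> V"
  shows "length p \<le> Suc (tree_diam V E)"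
proof -
  have loopfree: "\<forall>e\<in>E. card e = 2" and acyclic: "\<not> has_cycle E" and fin: "finite V"
    using T unfolding is_tree_def is_graph_def by auto
  obtain q where q: "is_walk E q" "hd q = hd p" "last q = last p"
    "length q = Suc (dist E (hd p) (last p))"
    using shortest_walk_exists[of E "hd p" "last p"] p(1) unfolding reachable_def by blast
  have "length p \<le> length q"
    using non_backtracking_walk_shortest[OF loopfree acyclic q(1) p(1,2)] q by simp
  also have "\<dots> \<le> Suc (tree_diam V E)"
    using q dist_le_tree_diam[OF fin p(3,4)] by simp
  finally show ?thesis .
qed

definition internal_vertices :: "nat set \<Rightarrow> nat set set \<Rightarrow> nat set" where
  "internal_vertices V E = {v \<in> V. \<exists>a b. a \<noteq> b \<and> {v, a} \<in> E \<and> {v, b} \<in> E}"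

lemma internal_vertex_other_neighbour:
  "v \<in> internal_vertices V E \<Longrightarrow> \<exists>w. {v, w} \<in> E \<and> w \<noteq> u"
  unfolding internal_vertices_def by blast

lemma tree_obtain_edge:
  assumes "is_tree V E" "E \<noteq> {}"
  obtains a b where "{a, b} \<in> E"
proof -
  obtain e where "e \<in> E"
    using assms(2) by blast
  then show thesis
    using assms(1) that unfolding is_tree_def is_graph_def by (metis card_2_iff)
qed

lemma sdeg_not_internal:
  assumes T: "is_tree V E" and "E \<noteq> {}" and v: "v \<in> V" "v \<notin> internal_vertices V E"
  shows "sdeg E s v \<in> {1, -1}"
proof -
  have edge: "\<exists>w. e = {v, w} \<and> w \<noteq> v" if "e \<in> E" "v \<in> e" for e
    using T that unfolding is_tree_def is_graph_def by (auto simp: card_2_iff)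
  obtain a b where "{a, b} \<in> E"
    using tree_obtain_edge[OF T \<open>E \<noteq> {}\<close>] .
  then obtain u where u: "u \<in> V" "u \<noteq> v"
    using tree_edgeD[OF T] by blast
  then have "reachable E v u"
    using T v(1) unfolding is_tree_def connected_graph_def by blast
  then obtain xs where "is_walk E xs" "hd xs = v" "last xs = u"
    unfolding reachable_def by blast
  then obtain w where w: "{v, w} \<in> E"
    using u(2) by (cases xs; cases "tl xs") auto
  have unique: "e = {v, w}" if e: "e \<in> E" "v \<in> e" for e
  proof -
    obtain w' where w': "e = {v, w'}"
      using edge[OF e] by blast
    have "w' = w"
      using v w w' e unfolding internal_vertices_def by blast
    then show ?thesis
      using w' by simp
  qed
  show ?thesis
  proof (cases "s {v, w}")
    case True
    then have pos: "{e \<in> E. v \<in> e \<and> s e} = {{v, w}}"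
      and neg: "{e \<in> E. v \<in> e \<and> \<not> s e} = {}"
      using w unique by blast+
    show ?thesis
      unfolding sdeg_def pos neg by simp
  next
    case False
    then have pos: "{e \<in> E. v \<in> e \<and> s e} = {}"
      and neg: "{e \<in> E. v \<in> e \<and> \<not> s e} = {{v, w}}"
      using w unique by blast+
    show ?thesis
      unfolding sdeg_def pos neg by simp
  qed
qed

lemma card_sdeg_image_le_card_internal_vertices:
  assumes T: "is_tree V E" and "E \<noteq> {}"
  shows "card (sdeg E s ` V) \<le> card (internal_vertices V E) + 2"
proof -
  have fin: "finite (internal_vertices V E)"
    using T unfolding is_tree_def is_graph_def internal_vertices_def by simp
  have "sdeg E s ` V \<subseteq> {1, -1} \<union> sdeg E s ` internal_vertices V E"
    using sdeg_not_internal[OF assms] unfolding internal_vertices_def by blast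
  then have "card (sdeg E s ` V) \<le> card ({1, -1} \<union> sdeg E s ` internal_vertices V E)"
    using fin by (intro card_mono) simp_all
  also have "\<dots> \<le> card {1, -1 :: int} + card (sdeg E s ` internal_vertices V E)"
    by (rule card_Un_le)
  also have "\<dots> \<le> 2 + card (internal_vertices V E)"
    using card_image_le[OF fin] by simp
  finally show ?thesis by simp
qed

lemma tree_diam_ge_1:
  assumes T: "is_tree V E" and "E \<noteq> {}"
  shows "1 \<le> tree_diam V E"
proof -
  obtain a b where "{a, b} \<in> E"
    using tree_obtain_edge[OF assms] .
  then show ?thesis
    using non_backtracking_walk_length_le_tree_diam[OF T, of "[a, b]"] tree_edgeD[OF T] by simp
qed

lemma tree_diam_ge_2_if_internal:
  assumes T: "is_tree V E" and "v \<in> internal_vertices V E"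
  shows "2 \<le> tree_diam V E"
proof -
  obtain a b where "a \<noteq> b" "{a, v} \<in> E" "{v, b} \<in> E"
    using assms(2) unfolding internal_vertices_def by (auto simp: insert_commute)
  then show ?thesis
    using non_backtracking_walk_length_le_tree_diam[OF T, of "[a, v, b]"] tree_edgeD[OF T] by simp
qed

lemma tree_diam_ge_3_if_adjacent_internal:
  assumes T: "is_tree V E" and ab: "a \<in> internal_vertices V E" "b \<in> internal_vertices V E"
    "{a, b} \<in> E"
  shows "3 \<le> tree_diam V E"
proof -
  obtain a' b' where "{a', a} \<in> E" "a' \<noteq> b" "{b, b'} \<in> E" "b' \<noteq> a"
    using ab(1,2) internal_vertex_other_neighbour by (metis insert_commute)
  then show ?thesis
    using non_backtracking_walk_length_le_tree_diam[OF T, of "[a', a, b, b']"] tree_edgeD[OF T]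
      ab(3) by simp
qed

lemma tree_diam_ge_4_if_nonadjacent_internal:
  assumes T: "is_tree V E" and ab: "a \<in> internal_vertices V E" "b \<in> internal_vertices V E"
    "a \<noteq> b" "{a, b} \<notin> E"
  shows "4 \<le> tree_diam V E"
proof -
  have fin: "finite V" and V: "a \<in> V" "b \<in> V" and "reachable E a b"
    using T ab unfolding is_tree_def is_graph_def connected_graph_def internal_vertices_def
    by auto
  then obtain xs where xs: "is_walk E xs" "hd xs = a" "last xs = b" "length xs = Suc (dist E a b)"
    using shortest_walk_exists by blast
  txt \<open>A short shortest walk from \<open>a\<close> to \<open>b\<close>, prolonged at both ends through further
    neighbours of \<open>a\<close> and \<open>b\<close>, is non-backtracking.\<close>
  consider "length xs \<le> 2" | "length xs = 3" | "length xs = 4" | "5 \<le> length xs"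
    by linarith
  then show ?thesis
  proof cases
    case 1
    then show ?thesis
      using xs ab(3,4) by (cases xs; cases "tl xs") auto
  next
    case 2
    then obtain m where "xs = [a, m, b]"
      using xs by (auto simp: length_Suc_conv numeral_3_eq_3)
    moreover obtain a' b' where "{a', a} \<in> E" "a' \<noteq> m" "{b, b'} \<in> E" "b' \<noteq> m"
      using ab(1,2) internal_vertex_other_neighbour by (metis insert_commute)
    ultimately show ?thesis
      using non_backtracking_walk_length_le_tree_diam[OF T, of "[a', a, m, b, b']"] xs ab
        tree_edgeD[OF T] by auto
  next
    case 3
    then obtain x y where xs4: "xs = [a, x, y, b]"
      using xs by (auto simp: length_Suc_conv numeral_3_eq_3 numeral_2_eq_2)
    then have "a \<noteq> y" "x \<noteq> b"
      using xs ab(4) by auto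
    moreover obtain a' b' where "{a', a} \<in> E" "a' \<noteq> x" "{b, b'} \<in> E" "b' \<noteq> y"
      using ab(1,2) internal_vertex_other_neighbour by (metis insert_commute)
    ultimately show ?thesis
      using non_backtracking_walk_length_le_tree_diam[OF T, of "[a', a, x, y, b, b']"] xs xs4 ab
        tree_edgeD[OF T] by auto
  next
    case 4
    then show ?thesis
      using xs dist_le_tree_diam[OF fin V, of E] by simp
  qed
qed

lemma card_internal_vertices_le_tree_diam:
  assumes T: "is_tree V E" and "tree_diam V E \<le> 3"
  shows "card (internal_vertices V E) \<le> tree_diam V E - 1"
proof -
  let ?I = "internal_vertices V E"
  have fin: "finite ?I"
    using T unfolding is_tree_def is_graph_def internal_vertices_def by simp
  consider "tree_diam V E \<le> 1" | "tree_diam V E = 2" | "tree_diam V E = 3"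
    using assms(2) by linarith
  then show ?thesis
  proof cases
    case 1
    then have "?I = {}"
      using tree_diam_ge_2_if_internal[OF T] by fastforce
    then show ?thesis by simp
  next
    case 2
    then have "a = b" if "a \<in> ?I" "b \<in> ?I" for a b
      using that tree_diam_ge_3_if_adjacent_internal[OF T] tree_diam_ge_4_if_nonadjacent_internal[OF T]
      by fastforce
    then show ?thesis
      using 2 card_le_Suc0_iff_eq[OF fin] by simp
  next
    case 3
    then have adjacent: "{a, b} \<in> E" if "a \<in> ?I" "b \<in> ?I" "a \<noteq> b" for a b
      using that tree_diam_ge_4_if_nonadjacent_internal[OF T] by fastforce
    have "\<not> 3 \<le> card ?I"
    proof
      assume "3 \<le> card ?I"
      then obtain a b c where "{a, b, c} \<subseteq> ?I" "a \<noteq> b" "b \<noteq> c" "a \<noteq> c"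
        by (metis obtain_subset_with_card_n card_3_iff)
      then have "is_walk E [a, b, c, a]"
        using adjacent by (simp add: insert_commute)
      then have "has_cycle E"
        unfolding has_cycle_def using \<open>a \<noteq> b\<close> \<open>b \<noteq> c\<close> \<open>a \<noteq> c\<close>
        by (intro exI[of _ "[a, b, c, a]"]) auto
      then show False
        using T unfolding is_tree_def by simp
    qed
    then show ?thesis
      using 3 by simp
  qed
qed

lemma card_sdeg_image_le_tree_diam:
  assumes "is_tree V E" "E \<noteq> {}" "tree_diam V E \<le> 3"
  shows "card (sdeg E s ` V) \<le> tree_diam V E + 1"
  using card_sdeg_image_le_card_internal_vertices[OF assms(1,2), of s]
    card_internal_vertices_le_tree_diam[OF assms(1,3)] tree_diam_ge_1[OF assms(1,2)]
  by linarith

lemma cycle_vertex_two_neighbours: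
  assumes xs: "is_walk E xs" "4 \<le> length xs" "hd xs = last xs" "distinct (tl xs)"
    and v: "v \<in> set (tl xs)"
  obtains a b where "a \<noteq> b" "{v, a} \<in> E" "{v, b} \<in> E" "a \<in> set (tl xs)" "b \<in> set (tl xs)"
proof -
  define ys where "ys = tl xs"
  define m where "m = length ys"
  have m: "3 \<le> m"
    using xs(2) unfolding m_def ys_def by simp
  have ys_nth: "ys ! i = xs ! Suc i" if "i < m" for i
    using that unfolding ys_def m_def by (simp add: nth_tl)
  have succ: "{ys ! k, ys ! ((k + 1) mod m)} \<in> E" if "k < m" for k
  proof (cases "k + 1 < m")
    case True
    then show ?thesis
      using xs(1) ys_nth[of k] ys_nth[of "k + 1"] unfolding is_walk_def m_def ys_def by auto
  next
    case False
    then have "Suc k = length xs - 1"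
      using that unfolding m_def ys_def by simp
    then have "ys ! k = last xs"
      using ys_nth[OF that] xs(2) by (metis last_conv_nth list.size(3) not_numeral_le_zero)
    moreover have "ys ! 0 = xs ! 1" "{xs ! 0, xs ! 1} \<in> E"
      using ys_nth[of 0] m xs(1,2) unfolding is_walk_def by auto
    moreover have "xs \<noteq> []"
      using xs(2) by auto
    ultimately have "{ys ! k, ys ! 0} \<in> E"
      using xs(3) hd_conv_nth[of xs] by (metis One_nat_def insert_commute)
    moreover have "k + 1 = m"
      using False that by simp
    ultimately show ?thesis
      by simp
  qed
  obtain k where k: "k < m" "ys ! k = v"
    using v unfolding ys_def m_def in_set_conv_nth by blast
  define k' where "k' = (if k = 0 then m - 1 else k - 1)"
  have k': "k' < m" "(k' + 1) mod m = k"
    using k m unfolding k'_def by auto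
  then have "{v, ys ! k'} \<in> E"
    using succ[of k'] k by (simp add: insert_commute)
  moreover have "(k + 1) mod m \<noteq> k'"
    using k m unfolding k'_def by (cases "k + 1 = m") auto
  then have "ys ! ((k + 1) mod m) \<noteq> ys ! k'"
    using k m k'(1) xs(4) unfolding ys_def m_def by (simp add: nth_eq_iff_index_eq)
  ultimately show thesis
    using that succ[OF k(1)] k m k'(1) unfolding ys_def m_def by (simp add: nth_mem)
qed

lemma is_tree_parent:
  fixes par :: "nat \<Rightarrow> nat"
  assumes fin: "finite V" and root: "0 \<in> V" and par: "\<forall>x\<in>V - {0}. par x < x \<and> par x \<in> V"
    and E: "E = (\<lambda>x. {x, par x}) ` (V - {0})"
  shows "is_tree V E"
proof -
  have "card {x, par x} = 2" if "x \<in> V - {0}" for x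
    using par that by (metis card_2_iff less_irrefl)
  then have graph: "is_graph V E"
    using fin par unfolding E is_graph_def by auto
  have to_root: "reachable E x 0" if "x \<in> V" for x
    using that
  proof (induction x rule: less_induct)
    case (less x)
    show ?case
    proof (cases "x = 0")
      case False
      then have "reachable E x (par x)" "reachable E (par x) 0"
        using less par unfolding E by (auto intro: reachable_edge)
      then show ?thesis
        by (rule reachable_trans)
    qed (simp add: reachable_refl)
  qed
  have connected: "connected_graph V E"
    unfolding connected_graph_def
  proof (intro conjI ballI)
    fix u v assume "u \<in> V" "v \<in> V"
    then show "reachable E u v"
      using to_root reachable_sym reachable_trans by metis
  qed (use root in blast)
  have below_is_parent: "y = par x" if xy: "{x, y} \<in> E" "y < x" for x y
  proof -
    obtain w where "w \<in> V - {0}" "{x, y} = {w, par w}"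
      using xy(1) unfolding E by blast
    then show ?thesis
      using par xy(2) by (metis doubleton_eq_iff less_asym)
  qed
  have "\<not> has_cycle E"
  proof
    assume "has_cycle E"
    then obtain xs where xs: "is_walk E xs" "4 \<le> length xs" "hd xs = last xs" "distinct (tl xs)"
      unfolding has_cycle_def by blast
    txt \<open>The largest vertex of a cycle has two smaller neighbours on it, but only one parent.\<close>
    define v where "v = Max (set (tl xs))"
    have "v \<in> set (tl xs)"
      using xs(2) unfolding v_def by (intro Max_in) (auto simp: length_greater_0_conv [symmetric])
    then obtain a b where ab: "a \<noteq> b" "{v, a} \<in> E" "{v, b} \<in> E" "a \<le> v" "b \<le> v"
      using cycle_vertex_two_neighbours[OF xs] unfolding v_def by (metis List.finite_set Max_ge)
    moreover have "a \<noteq> v" "b \<noteq> v"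
      using ab graph unfolding is_graph_def by fastforce+
    ultimately show False
      using below_is_parent[of v a] below_is_parent[of v b] by simp
  qed
  then show ?thesis
    unfolding is_tree_def using graph connected by blast
qed

lemma sdeg_parent:
  fixes par :: "nat \<Rightarrow> nat"
  assumes par: "\<forall>x\<in>V - {0}. par x < x" and E: "E = (\<lambda>x. {x, par x}) ` (V - {0})"
  shows "sdeg E s v = int (card {x \<in> V - {0}. (x = v \<or> par x = v) \<and> s {x, par x}})
    - int (card {x \<in> V - {0}. (x = v \<or> par x = v) \<and> \<not> s {x, par x}})"
proof -
  define edge where "edge x = {x, par x}" for x
  have "inj_on edge (V - {0})"
  proof (rule inj_onI)
    fix x y assume "x \<in> V - {0}" "y \<in> V - {0}" "edge x = edge y"
    then show "x = y"
      using par unfolding edge_def by (metis doubleton_eq_iff less_asym)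
  qed
  then have "card (edge ` {x \<in> V - {0}. (x = v \<or> par x = v) \<and> P (edge x)})
      = card {x \<in> V - {0}. (x = v \<or> par x = v) \<and> P (edge x)}" for P
    by (rule card_image[OF inj_on_subset]) blast
  moreover have "{e \<in> E. v \<in> e \<and> P e} = edge ` {x \<in> V - {0}. (x = v \<or> par x = v) \<and> P (edge x)}"
    for P
    unfolding E edge_def by auto
  ultimately show ?thesis
    unfolding sdeg_def edge_def by simp
qed

text \<open>The spider with \<open>m\<close> hubs: hub \<open>0\<close> is joined to the hubs \<open>1, \<dots>, m - 1\<close>, and
  \<open>(j + 1) * m + i\<close> is the \<open>j\<close>-th leaf of hub \<open>i\<close>.  Hub \<open>i\<close> has \<open>P i + Q i\<close> leaves; the edges to
  the last \<open>Q i\<close> of them are negative, all other edges are positive.\<close>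

definition spider_vertices :: "nat \<Rightarrow> (nat \<Rightarrow> nat) \<Rightarrow> (nat \<Rightarrow> nat) \<Rightarrow> nat set" where
  "spider_vertices m P Q = {..<m} \<union> {x. m \<le> x \<and> x div m - 1 < P (x mod m) + Q (x mod m)}"

definition spider_parent :: "nat \<Rightarrow> nat \<Rightarrow> nat" where
  "spider_parent m x = (if x < m then 0 else x mod m)"

definition spider_edges :: "nat \<Rightarrow> (nat \<Rightarrow> nat) \<Rightarrow> (nat \<Rightarrow> nat) \<Rightarrow> nat set set" where
  "spider_edges m P Q = (\<lambda>x. {x, spider_parent m x}) ` (spider_vertices m P Q - {0})"

definition negative_leaf :: "nat \<Rightarrow> (nat \<Rightarrow> nat) \<Rightarrow> nat \<Rightarrow> bool" where
  "negative_leaf m P x \<longleftrightarrow> m \<le> x \<and> P (x mod m) \<le> x div m - 1"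

definition spider_sign :: "nat \<Rightarrow> (nat \<Rightarrow> nat) \<Rightarrow> nat set \<Rightarrow> bool" where
  "spider_sign m P e \<longleftrightarrow> (\<forall>x\<in>e. \<not> negative_leaf m P x)"

lemma leaf_div_mod:
  fixes m :: nat
  assumes "i < m"
  shows "(Suc j * m + i) div m = Suc j" "(Suc j * m + i) mod m = i"
  using assms div_mult_self1[of m i "Suc j"] mod_mult_self1[of i "Suc j" m]
  by (simp_all add: add.commute)

lemma leaves_of_hub_eq_image:
  fixes m :: nat
  assumes "0 < m" "i < m"
  shows "{x. m \<le> x \<and> x mod m = i \<and> R (x div m - 1)} = (\<lambda>j. Suc j * m + i) ` {j. R j}"
proof (intro equalityI subsetI)
  fix x assume x: "x \<in> {x. m \<le> x \<and> x mod m = i \<and> R (x div m - 1)}"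
  then have "x = Suc (x div m - 1) * m + i"
    using assms div_mult_mod_eq[of x m] by (simp add: div_greater_zero_iff)
  then show "x \<in> (\<lambda>j. Suc j * m + i) ` {j. R j}"
    using x by blast
qed (use assms leaf_div_mod in auto)

lemma card_leaves_of_hub:
  fixes m :: nat
  assumes "0 < m" "i < m"
  shows "card {x. m \<le> x \<and> x mod m = i \<and> R (x div m - 1)} = card {j. R j}"
  unfolding leaves_of_hub_eq_image[OF assms]
  by (rule card_image) (use assms in \<open>auto intro!: inj_onI\<close>)

lemma finite_spider_vertices: "0 < m \<Longrightarrow> finite (spider_vertices m P Q)"
proof -
  assume m: "0 < m"
  have "{x. m \<le> x \<and> x div m - 1 < P (x mod m) + Q (x mod m)}
      = (\<Union>i<m. {x. m \<le> x \<and> x mod m = i \<and> x div m - 1 < P i + Q i})"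
    using m by auto
  also have "\<dots> = (\<Union>i<m. (\<lambda>j. Suc j * m + i) ` {j. j < P i + Q i})"
    by (intro SUP_cong refl leaves_of_hub_eq_image[OF m]) simp
  finally have "finite {x. m \<le> x \<and> x div m - 1 < P (x mod m) + Q (x mod m)}"
    by simp
  then show ?thesis
    unfolding spider_vertices_def by simp
qed

lemma spider_parent_less_hubs: "0 < m \<Longrightarrow> spider_parent m x < m"
  unfolding spider_parent_def by simp

lemma spider_parent_less:
  assumes "0 < m" "x \<noteq> 0"
  shows "spider_parent m x < x"
proof (cases "x < m")
  case False
  moreover have "x mod m < m"
    using assms(1) by simp
  ultimately show ?thesis
    unfolding spider_parent_def by simp
qed (use assms in \<open>simp add: spider_parent_def\<close>)

lemma is_tree_spider:
  assumes m: "0 < m"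
  shows "is_tree (spider_vertices m P Q) (spider_edges m P Q)"
proof (rule is_tree_parent[where par = "spider_parent m"])
  show "\<forall>x\<in>spider_vertices m P Q - {0}.
      spider_parent m x < x \<and> spider_parent m x \<in> spider_vertices m P Q"
    using spider_parent_less[OF m] spider_parent_less_hubs[OF m]
    unfolding spider_vertices_def by blast
  show "0 \<in> spider_vertices m P Q"
    using m unfolding spider_vertices_def by simp
qed (simp_all add: finite_spider_vertices[OF m] spider_edges_def)

lemma sdeg_spider:
  assumes m: "0 < m"
  shows "sdeg (spider_edges m P Q) (spider_sign m P) v =
    int (card {x \<in> spider_vertices m P Q - {0}. (x = v \<or> spider_parent m x = v) \<and> \<not> negative_leaf m P x})
    - int (card {x \<in> spider_vertices m P Q - {0}. (x = v \<or> spider_parent m x = v) \<and> negative_leaf m P x})"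
proof -
  have "\<not> negative_leaf m P (spider_parent m x)" for x
    using spider_parent_less_hubs[OF m, of x] unfolding negative_leaf_def by simp
  then have "spider_sign m P {x, spider_parent m x} \<longleftrightarrow> \<not> negative_leaf m P x" for x
    by (auto simp: spider_sign_def)
  then show ?thesis
    using sdeg_parent[where par = "spider_parent m" and V = "spider_vertices m P Q"
        and E = "spider_edges m P Q" and s = "spider_sign m P"]
      spider_parent_less[OF m] spider_edges_def by simp
qed

lemma card_positive_leaves:
  fixes m :: nat
  assumes "0 < m" "i < m"
  shows "card {x. m \<le> x \<and> x mod m = i \<and> x div m - 1 < P i} = P i"
  using card_leaves_of_hub[OF assms, of "\<lambda>j. j < P i"] by simp

lemma card_negative_leaves:
  fixes m :: nat
  assumes "0 < m" "i < m"
  shows "card {x. m \<le> x \<and> x mod m = i \<and> P i \<le> x div m - 1 \<and> x div m - 1 < P i + Q i} = Q i"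
proof -
  have "{j. P i \<le> j \<and> j < P i + Q i} = {P i..<P i + Q i}"
    by auto
  then show ?thesis
    using card_leaves_of_hub[OF assms, of "\<lambda>j. P i \<le> j \<and> j < P i + Q i"] by simp
qed

lemma finite_positive_leaves:
  fixes m :: nat
  assumes "0 < m" "i < m"
  shows "finite {x. m \<le> x \<and> x mod m = i \<and> x div m - 1 < P i}"
  using leaves_of_hub_eq_image[OF assms, of "\<lambda>j. j < P i"] by simp

lemma sdeg_spider_root:
  assumes m: "0 < m"
  shows "sdeg (spider_edges m P Q) (spider_sign m P) 0 = int (m - 1 + P 0) - int (Q 0)"
proof -
  have pos: "{x \<in> spider_vertices m P Q - {0}. (x = 0 \<or> spider_parent m x = 0) \<and> \<not> negative_leaf m P x}
      = {1..<m} \<union> {x. m \<le> x \<and> x mod m = 0 \<and> x div m - 1 < P 0}"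
    using m by (auto simp: spider_vertices_def spider_parent_def negative_leaf_def)
  have neg: "{x \<in> spider_vertices m P Q - {0}. (x = 0 \<or> spider_parent m x = 0) \<and> negative_leaf m P x}
      = {x. m \<le> x \<and> x mod m = 0 \<and> P 0 \<le> x div m - 1 \<and> x div m - 1 < P 0 + Q 0}"
    using m by (auto simp: spider_vertices_def spider_parent_def negative_leaf_def)
  have "card ({1..<m} \<union> {x. m \<le> x \<and> x mod m = 0 \<and> x div m - 1 < P 0}) = m - 1 + P 0"
    using finite_positive_leaves[OF m m] card_positive_leaves[OF m m]
    by (subst card_Un_disjoint) auto
  then show ?thesis
    unfolding sdeg_spider[OF m] pos neg card_negative_leaves[OF m m] by simp
qed

lemma sdeg_spider_hub:
  assumes m: "0 < m" and i: "0 < i" "i < m"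
  shows "sdeg (spider_edges m P Q) (spider_sign m P) i = int (Suc (P i)) - int (Q i)"
proof -
  have pos: "{x \<in> spider_vertices m P Q - {0}. (x = i \<or> spider_parent m x = i) \<and> \<not> negative_leaf m P x}
      = insert i {x. m \<le> x \<and> x mod m = i \<and> x div m - 1 < P i}"
    using m i by (auto simp: spider_vertices_def spider_parent_def negative_leaf_def)
  have neg: "{x \<in> spider_vertices m P Q - {0}. (x = i \<or> spider_parent m x = i) \<and> negative_leaf m P x}
      = {x. m \<le> x \<and> x mod m = i \<and> P i \<le> x div m - 1 \<and> x div m - 1 < P i + Q i}"
    using m i by (auto simp: spider_vertices_def spider_parent_def negative_leaf_def)
  have "card (insert i {x. m \<le> x \<and> x mod m = i \<and> x div m - 1 < P i}) = Suc (P i)"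
    using finite_positive_leaves[OF m i(2)] card_positive_leaves[OF m i(2)] i by simp
  then show ?thesis
    unfolding sdeg_spider[OF m] pos neg card_negative_leaves[OF m i(2)] by simp
qed

lemma sdeg_spider_leaf:
  assumes m: "0 < m" and x: "x \<in> spider_vertices m P Q" "m \<le> x"
  shows "sdeg (spider_edges m P Q) (spider_sign m P) x = (if negative_leaf m P x then -1 else 1)"
proof -
  have "\<not> m \<le> spider_parent m y" for y
    using spider_parent_less_hubs[OF m, of y] by simp
  then have "{y \<in> spider_vertices m P Q - {0}. (y = x \<or> spider_parent m y = x) \<and> N y}
      = (if N x then {x} else {})" for N
    using m x by auto
  then show ?thesis
    unfolding sdeg_spider[OF m] by simp
qed

lemma sdeg_spider_image:
  assumes m: "0 < m" and "1 \<le> P 0" "1 \<le> Q 0"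
  shows "sdeg (spider_edges m P Q) (spider_sign m P) ` spider_vertices m P Q
    = {1, -1} \<union> insert (int (m - 1 + P 0) - int (Q 0)) ((\<lambda>i. int (Suc (P i)) - int (Q i)) ` {1..<m})"
    (is "?sdeg ` ?V = ?D")
proof
  show "?sdeg ` ?V \<subseteq> ?D"
  proof
    fix d assume "d \<in> ?sdeg ` ?V"
    then obtain x where x: "x \<in> ?V" "d = ?sdeg x"
      by blast
    consider "x = 0" | "0 < x" "x < m" | "m \<le> x"
      by linarith
    then show "d \<in> ?D"
      by cases (use x sdeg_spider_root[OF m] sdeg_spider_hub[OF m] sdeg_spider_leaf[OF m] in auto)
  qed
next
  have leaf_pos: "m \<in> ?V" "\<not> negative_leaf m P m"
    using m assms(2) by (auto simp: spider_vertices_def negative_leaf_def)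
  have "Suc (P 0) * m \<in> ?V" "negative_leaf m P (Suc (P 0) * m)" "m \<le> Suc (P 0) * m"
    using m assms(3) leaf_div_mod[OF m, of "P 0"]
    by (auto simp: spider_vertices_def negative_leaf_def)
  then have "-1 \<in> ?sdeg ` ?V"
    using sdeg_spider_leaf[OF m] by (metis image_eqI)
  moreover have "1 \<in> ?sdeg ` ?V"
    using sdeg_spider_leaf[OF m] leaf_pos by (metis image_eqI order_refl)
  moreover have "int (m - 1 + P 0) - int (Q 0) \<in> ?sdeg ` ?V"
    using m by (intro image_eqI[where x = 0]) (simp_all add: sdeg_spider_root spider_vertices_def)
  moreover have "int (Suc (P i)) - int (Q i) \<in> ?sdeg ` ?V" if "i \<in> {1..<m}" for i
    using m that
    by (intro image_eqI[where x = i]) (simp_all add: sdeg_spider_hub spider_vertices_def)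
  ultimately show "?D \<subseteq> ?sdeg ` ?V"
    by auto
qed

lemma dist_spider_parent_le:
  assumes m: "0 < m" and x: "x \<in> spider_vertices m P Q"
  shows "dist (spider_edges m P Q) x (spider_parent m x) \<le> 1"
proof (cases "x = 0")
  case True
  then show ?thesis
    by (simp add: spider_parent_def dist_self)
next
  case False
  then have "{x, spider_parent m x} \<in> spider_edges m P Q"
    using x unfolding spider_edges_def by blast
  then show ?thesis
    by (rule dist_edge_le)
qed

lemma tree_diam_spider_le:
  assumes m: "0 < m"
  shows "tree_diam (spider_vertices m P Q) (spider_edges m P Q) \<le> min (m + 1) 4"
proof -
  let ?V = "spider_vertices m P Q" and ?E = "spider_edges m P Q" and ?p = "spider_parent m"
  have fin: "finite ?V" and conn: "connected_graph ?V ?E"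
    using is_tree_spider[OF m] unfolding is_tree_def is_graph_def by auto
  have hubs: "{..<m} \<subseteq> ?V"
    by (auto simp: spider_vertices_def)
  then have root: "0 \<in> ?V"
    using m by auto
  have parent: "?p x < m" "?p (?p x) = 0" for x
    using spider_parent_less_hubs[OF m, of x] by (simp_all add: spider_parent_def)
  have reach: "reachable ?E x y" if "x \<in> ?V" "y \<in> ?V" for x y
    using conn that unfolding connected_graph_def by blast
  consider "m = 1" | "m = 2" | "2 < m"
    using m by linarith
  then show ?thesis
  proof cases
    case 1
    then have "?p x = 0" for x
      using parent(1)[of x] by simp
    then have "\<forall>x\<in>?V. dist ?E x 0 \<le> 1"
      using dist_spider_parent_le[OF m] by metis
    then show ?thesis
      using tree_diam_le_twice_radius[OF fin conn root, of 1] 1 by simp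
  next
    case 2
    then have "{0, 1} \<in> ?E"
      using hubs unfolding spider_edges_def spider_parent_def by (force simp: insert_commute)
    moreover have "?p x \<in> {0, 1}" for x
      using parent(1)[of x] 2 by auto
    then have "\<forall>x\<in>?V. dist ?E x 0 \<le> 1 \<or> dist ?E x 1 \<le> 1"
      using dist_spider_parent_le[OF m] by (metis insertE singletonD)
    moreover have "1 \<in> ?V"
      using hubs 2 by auto
    ultimately show ?thesis
      using tree_diam_le_3_if_central_edge[OF fin conn _ root] 2 by simp
  next
    case 3
    have "dist ?E x 0 \<le> 2" if "x \<in> ?V" for x
    proof -
      have p: "?p x \<in> ?V"
        using hubs parent(1) by blast
      have "dist ?E x 0 \<le> dist ?E x (?p x) + dist ?E (?p x) 0"
        using reach that p root by (intro dist_triangle)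
      then show ?thesis
        using dist_spider_parent_le[OF m that] dist_spider_parent_le[OF m p] parent(2) by simp
    qed
    then show ?thesis
      using tree_diam_le_twice_radius[OF fin conn root, of 2] 3 by simp
  qed
qed

lemma signed_spider_realizes:
  fixes Z :: "int set"
  assumes "finite Z" "Z \<noteq> {}"
  obtains V E s where "is_tree V E" "realizes V E s ({1, -1} \<union> Z)"
    "tree_diam V E \<le> min (card Z + 1) 4"
proof -
  obtain m :: nat and t where "Z = t ` {i. i < m}" "inj_on t {i. i < m}"
    using finite_imp_nat_seg_image_inj_on[OF assms(1)] by blast
  then have Z: "Z = t ` {..<m}" and inj: "inj_on t {..<m}"
    by (simp_all add: lessThan_def)
  have m: "m = card Z" "0 < m"
    using Z inj assms(2) by (auto simp: card_image)
  txt \<open>Hub \<open>0\<close> already has \<open>m - 1\<close> positive edges to the other hubs, and every other hub one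
    to hub \<open>0\<close>; \<open>h i\<close> is the surplus of positive over negative leaves that hub \<open>i\<close> still needs.\<close>
  define h where "h i = (if i = 0 then t 0 - int (m - 1) else t i - 1)" for i
  define P where "P i = nat (h i) + 1" for i
  define Q where "Q i = nat (- h i) + 1" for i
  have PQ: "int (P i) - int (Q i) = h i" for i
    unfolding P_def Q_def by simp
  have "int (Suc (P i)) - int (Q i) = t i" if "0 < i" for i
    using PQ[of i] that unfolding h_def by simp
  then have "(\<lambda>i. int (Suc (P i)) - int (Q i)) ` {1..<m} = t ` {1..<m}"
    by (intro image_cong) auto
  moreover have "int (m - 1 + P 0) - int (Q 0) = t 0"
    using PQ[of 0] unfolding h_def by simp
  moreover have "{..<m} = insert 0 {1..<m}"
    using m(2) by auto
  ultimately have "realizes (spider_vertices m P Q) (spider_edges m P Q) (spider_sign m P)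
      ({1, -1} \<union> Z)"
    unfolding realizes_def Z using sdeg_spider_image[OF m(2), of P Q] by (simp add: P_def Q_def)
  then show thesis
    by (rule that[OF is_tree_spider[OF m(2)]]) (use tree_diam_spider_le[OF m(2)] m(1) in simp)
qed

lemma tree_diam_ge_if_realizes:
  assumes T: "is_tree V E" and "realizes V E s D" "1 \<in> D"
  shows "min (card D - 1) 4 \<le> tree_diam V E"
proof -
  have D: "D = sdeg E s ` V"
    using assms(2) unfolding realizes_def .
  have "E \<noteq> {}"
  proof
    assume "E = {}"
    then have "D \<subseteq> {0}"
      unfolding D sdeg_def by auto
    then show False
      using \<open>1 \<in> D\<close> by auto
  qed
  then have "card D \<le> tree_diam V E + 1" if "tree_diam V E \<le> 3"
    unfolding D using card_sdeg_image_le_tree_diam[OF T] that by blast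
  then show ?thesis
    by fastforce
qed

lemma diamD_eqI:
  assumes "is_tree V E" "realizes V E s D" "tree_diam V E = d"
    and "\<And>V E s. is_tree V E \<Longrightarrow> realizes V E s D \<Longrightarrow> d \<le> tree_diam V E"
  shows "diamD D = d"
  unfolding diamD_def by (rule Least_equality) (use assms in blast)+

theorem mainTheorem7:
  fixes n :: nat and z :: "nat \<Rightarrow> int" and D :: "int set"
  assumes "n \<ge> 1"
    and "inj_on z {1..n}"
    and "\<forall>i\<in>{1..n}. z i \<noteq> 1 \<and> z i \<noteq> -1"
    and "D = {1, -1} \<union> z ` {1..n}"
  shows "(n = 1 \<longrightarrow> diamD D = 2) \<and> (n = 2 \<longrightarrow> diamD D = 3) \<and> (n > 2 \<longrightarrow> diamD D = 4)"
proof -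
  have card_Z: "card (z ` {1..n}) = n"
    using assms(2) by (simp add: card_image)
  have "card D = n + 2"
    unfolding assms(4) using assms(3) card_Z by (subst card_Un_disjoint) auto
  then have lower: "min (n + 1) 4 \<le> tree_diam V E" if "is_tree V E" "realizes V E s D" for V E s
    using tree_diam_ge_if_realizes[OF that] assms(4) by simp
  obtain V E s where "is_tree V E" "realizes V E s D" "tree_diam V E \<le> min (n + 1) 4"
    using signed_spider_realizes[of "z ` {1..n}"] assms(1,4) card_Z by auto
  then have "diamD D = min (n + 1) 4"
    using lower by (intro diamD_eqI) (auto intro: antisym)
  then show ?thesis
    by auto
qed

end
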